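(* Let $A$ be a local commutative ring and $N$ its nilradical. Then $A$ is an fqp-ring if and only if either $A$ is a chain ring, or $A/N$ is a valuation domain and $N$ is an $A/N$-module (i.e. $N^2=0$) which is divisible and torsionfree over $A/N$.
   Context: An $A$-module $V$ is $M$-projective if the natural map $\mathrm{Hom}_A(V,M)\to\mathrm{Hom}_A(V,M/X)$ is surjective for every submodule $X$ of $M$; $V$ is quasi-projective if it is $V$-projective. A ring is an fqp-ring if every finitely generated ideal is quasi-projective. A chain ring is a ring whose ideals are totally ordered by inclusion. *)

theory Defs
  imports Main
begin

text \<open>Throughout, A is the commutative ring given by a type of class comm_ring_1.
  Ideals of A are regarded as A-modules (the scalar action is ring multiplication).\<close>

definition is_ideal :: "'a::comm_ring_1 set \<Rightarrow> bool" where
  "is_ideal I \<longleftrightarrow> 0 \<in> I \<and> (\<forall>x\<in>I. \<forall>y\<in>I. x + y \<in> I) \<and> (\<forall>a. \<forall>x\<in>I. a * x \<in> I)"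

definition maximal_ideal :: "'a::comm_ring_1 set \<Rightarrow> bool" where
  "maximal_ideal M \<longleftrightarrow> is_ideal M \<and> M \<noteq> UNIV \<and>
     (\<forall>J. is_ideal J \<and> M \<subseteq> J \<longrightarrow> J = M \<or> J = UNIV)"

definition local_ring :: "'a::comm_ring_1 itself \<Rightarrow> bool" where
  "local_ring _ \<longleftrightarrow> (\<exists>!M::'a set. maximal_ideal M)"

definition fg_ideal :: "'a::comm_ring_1 set \<Rightarrow> bool" where
  "fg_ideal I \<longleftrightarrow> (\<exists>S. finite S \<and> I = {\<Sum>s\<in>S. c s * s | c. True})"

definition submodule :: "'a::comm_ring_1 set \<Rightarrow> 'a set \<Rightarrow> bool" where
  "submodule X M \<longleftrightarrow> X \<subseteq> M \<and> is_ideal X"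

text \<open>A-linear maps V \<rightarrow> M (functions considered on V only).\<close>
definition linear_map :: "'a::comm_ring_1 set \<Rightarrow> 'a set \<Rightarrow> ('a \<Rightarrow> 'a) \<Rightarrow> bool" where
  "linear_map V M h \<longleftrightarrow> (\<forall>v\<in>V. h v \<in> M) \<and>
     (\<forall>a b. \<forall>v\<in>V. \<forall>w\<in>V. h (a * v + b * w) = a * h v + b * h w)"

text \<open>An A-linear map V \<rightarrow> M/X, represented by a choice of representatives
  g : V \<rightarrow> M (every A-linear map V \<rightarrow> M/X arises this way).\<close>
definition linear_map_mod :: "'a::comm_ring_1 set \<Rightarrow> 'a set \<Rightarrow> 'a set \<Rightarrow> ('a \<Rightarrow> 'a) \<Rightarrow> bool" where
  "linear_map_mod V M X g \<longleftrightarrow> (\<forall>v\<in>V. g v \<in> M) \<and>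
     (\<forall>a b. \<forall>v\<in>V. \<forall>w\<in>V. g (a * v + b * w) - (a * g v + b * g w) \<in> X)"

text \<open>V is M-projective: Hom(V,M) \<rightarrow> Hom(V,M/X) is surjective for every submodule X of M.\<close>
definition rel_projective :: "'a::comm_ring_1 set \<Rightarrow> 'a set \<Rightarrow> bool" where
  "rel_projective V M \<longleftrightarrow> (\<forall>X g. submodule X M \<and> linear_map_mod V M X g \<longrightarrow>
     (\<exists>h. linear_map V M h \<and> (\<forall>v\<in>V. h v - g v \<in> X)))"

definition quasi_projective :: "'a::comm_ring_1 set \<Rightarrow> bool" where
  "quasi_projective V \<longleftrightarrow> rel_projective V V"

definition fqp_ring :: "'a::comm_ring_1 itself \<Rightarrow> bool" where
  "fqp_ring _ \<longleftrightarrow> (\<forall>I::'a set. is_ideal I \<and> fg_ideal I \<longrightarrow> quasi_projective I)"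

definition chain_ring :: "'a::comm_ring_1 itself \<Rightarrow> bool" where
  "chain_ring _ \<longleftrightarrow> (\<forall>I J::'a set. is_ideal I \<and> is_ideal J \<longrightarrow> I \<subseteq> J \<or> J \<subseteq> I)"

definition nilradical :: "'a::comm_ring_1 set" where
  "nilradical = {x. \<exists>n. x ^ n = 0}"

text \<open>A/N is a valuation domain, for an ideal N, expressed on representatives:
  A/N is an integral domain (N is a proper ideal and prime) and for all residue
  classes one divides the other.\<close>
definition quotient_valuation_domain :: "'a::comm_ring_1 set \<Rightarrow> bool" where
  "quotient_valuation_domain N \<longleftrightarrow> is_ideal N \<and> (1::'a) \<notin> N \<and>
     (\<forall>x y. x * y \<in> N \<longrightarrow> x \<in> N \<or> y \<in> N) \<and>
     (\<forall>x y. (\<exists>c. y - c * x \<in> N) \<or> (\<exists>c. x - c * y \<in> N))"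

definition divisible_over_quotient :: "'a::comm_ring_1 set \<Rightarrow> bool" where
  "divisible_over_quotient N \<longleftrightarrow> (\<forall>r. r \<notin> N \<longrightarrow> (\<forall>x\<in>N. \<exists>y\<in>N. x = r * y))"

definition torsionfree_over_quotient :: "'a::comm_ring_1 set \<Rightarrow> bool" where
  "torsionfree_over_quotient N \<longleftrightarrow> (\<forall>r. \<forall>x\<in>N. r \<notin> N \<and> r * x = 0 \<longrightarrow> x = 0)"

end

theory Submission
  imports Defs
begin

text \<open>
  Call \<open>a\<close> and \<open>b\<close> incomparable if neither divides the other; \<open>A\<close> is a chain ring
  iff there is no such pair. For an incomparable pair, quasi-projectivity of the ideal
  \<open>(a, b)\<close>, tested against the submodules \<open>Aa \<inter> Ab\<close> and \<open>\<mm>b\<close> (\<open>\<mm>\<close> the maximal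
  ideal), yields \<open>Aa \<inter> Ab = 0\<close> and \<open>ann a \<subseteq> ann b\<close>. If \<open>A\<close> is not a chain ring,
  these two properties alone force: incomparable elements square to zero; a nonzero
  nilpotent \<open>x\<close> has an incomparable partner (otherwise every power of \<open>x\<close> divides a fixed
  incomparable pair); hence \<open>N\<^sup>2 = 0\<close>, every element outside \<open>N\<close> divides both members
  of every incomparable pair, and from this \<open>A/N\<close> is a valuation domain over which \<open>N\<close>
  is divisible and torsion-free.

  Conversely, an ideal with finite generating set \<open>S\<close> is quasi-projective as soon as
  every assignment of elements of the ideal to the generators respects all relations
  among them. For a minimal \<open>S\<close> this holds in a chain ring, where \<open>S\<close> has at most one
  element, and under the second condition, where either \<open>S\<close> is a singleton or
  \<open>S \<subseteq> N\<close> and every relation has all its coefficients in \<open>N\<close>, which annihilates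
  the ideal.
\<close>

lemma ideal_0: "is_ideal J \<Longrightarrow> 0 \<in> J"
  unfolding is_ideal_def by blast

lemma ideal_add: "is_ideal J \<Longrightarrow> x \<in> J \<Longrightarrow> y \<in> J \<Longrightarrow> x + y \<in> J"
  unfolding is_ideal_def by blast

lemma ideal_mult: "is_ideal J \<Longrightarrow> x \<in> J \<Longrightarrow> a * x \<in> J"
  unfolding is_ideal_def by blast

lemma ideal_neg: "is_ideal J \<Longrightarrow> x \<in> J \<Longrightarrow> - x \<in> J"
  using ideal_mult[of J x "- 1"] by simp

lemma ideal_sum: "is_ideal J \<Longrightarrow> (\<And>s. s \<in> S \<Longrightarrow> f s \<in> J) \<Longrightarrow> sum f S \<in> J"
  by (induction S rule: infinite_finite_induct) (auto intro: ideal_0 ideal_add)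

lemma ideal_eq_UNIV: "is_ideal J \<Longrightarrow> 1 \<in> J \<Longrightarrow> J = UNIV"
  using ideal_mult[of J 1] by auto

lemma is_ideal_principal: "is_ideal {y. x dvd y}"
  unfolding is_ideal_def by auto

definition ideal_span :: "'a::comm_ring_1 set \<Rightarrow> 'a set" where
  "ideal_span S = {\<Sum>s\<in>S. c s * s | c. True}"

lemma span_memI: "x = (\<Sum>s\<in>S. c s * s) \<Longrightarrow> x \<in> ideal_span S"
  unfolding ideal_span_def by blast

lemma fg_ideal_iff_span: "fg_ideal I \<longleftrightarrow> (\<exists>S. finite S \<and> I = ideal_span S)"
  unfolding fg_ideal_def ideal_span_def by simp

lemma is_ideal_span: "is_ideal (ideal_span S)"
  unfolding is_ideal_def
proof (intro conjI ballI allI)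
  show "0 \<in> ideal_span S" by (rule span_memI[where c = "\<lambda>_. 0"]) simp
next
  fix x y assume "x \<in> ideal_span S" "y \<in> ideal_span S"
  then obtain c d where "x = (\<Sum>s\<in>S. c s * s)" "y = (\<Sum>s\<in>S. d s * s)"
    unfolding ideal_span_def by blast
  then show "x + y \<in> ideal_span S"
    by (intro span_memI[where c = "\<lambda>s. c s + d s"]) (simp add: sum.distrib distrib_right)
next
  fix a x assume "x \<in> ideal_span S"
  then obtain c where "x = (\<Sum>s\<in>S. c s * s)" unfolding ideal_span_def by blast
  then show "a * x \<in> ideal_span S"
    by (intro span_memI[where c = "\<lambda>s. a * c s"]) (simp add: sum_distrib_left mult.assoc)
qed

lemma span_superset: assumes "finite S" shows "S \<subseteq> ideal_span S"
proof
  fix s assume "s \<in> S"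
  have "(\<Sum>x\<in>S. (if x = s then 1 else 0) * x) = (\<Sum>x\<in>S. if x = s then s else 0)"
    by (rule sum.cong) auto
  also have "\<dots> = s" using \<open>s \<in> S\<close> assms by simp
  finally have "s = (\<Sum>x\<in>S. (if x = s then 1 else 0) * x)" ..
  then show "s \<in> ideal_span S" by (rule span_memI)
qed

lemma span_least: assumes "is_ideal J" "S \<subseteq> J" shows "ideal_span S \<subseteq> J"
proof
  fix x assume "x \<in> ideal_span S"
  then obtain c where "x = (\<Sum>s\<in>S. c s * s)" unfolding ideal_span_def by blast
  then show "x \<in> J" using assms by (auto intro!: ideal_sum ideal_mult)
qed

lemma span_mono: "finite T \<Longrightarrow> S \<subseteq> T \<Longrightarrow> ideal_span S \<subseteq> ideal_span T"
  using span_least[OF is_ideal_span] span_superset by blast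

lemma span_singleton: "ideal_span {a} = {y. a dvd y}"
  unfolding ideal_span_def by (auto simp: mult.commute elim!: dvdE)

definition pair_ideal :: "'a::comm_ring_1 \<Rightarrow> 'a \<Rightarrow> 'a set" where
  "pair_ideal a b = {r * a + s * b | r s. True}"

lemma pair_idealI: "p * a + q * b \<in> pair_ideal a b"
  unfolding pair_ideal_def by blast

lemma pair_ideal_left: "a \<in> pair_ideal a b" and pair_ideal_right: "b \<in> pair_ideal a b"
  using pair_idealI[of 1 a 0 b] pair_idealI[of 0 a 1 b] by simp_all

lemma span_pair: "ideal_span {a, b} = pair_ideal a b"
proof (cases "a = b")
  case True
  have "a dvd y \<longleftrightarrow> (\<exists>r s. y = r * a + s * a)" for y
    by (metis add_0 distrib_right dvd_def mult.commute mult_zero_left)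
  then show ?thesis using True by (simp add: span_singleton pair_ideal_def)
next
  case False
  have sum_pair: "(\<Sum>y\<in>{a, b}. c y * y) = c a * a + c b * b" for c using False by simp
  show ?thesis
  proof (intro set_eqI iffI)
    fix x assume "x \<in> ideal_span {a, b}"
    then show "x \<in> pair_ideal a b" unfolding ideal_span_def sum_pair pair_ideal_def by blast
  next
    fix x assume "x \<in> pair_ideal a b"
    then obtain r s where "x = r * a + s * b" unfolding pair_ideal_def by blast
    then show "x \<in> ideal_span {a, b}"
      by (intro span_memI[where c = "\<lambda>y. if y = a then r else s"]) (simp add: sum_pair not_sym[OF False])
  qed
qed

lemma is_ideal_pair_ideal: "is_ideal (pair_ideal a b)"
  unfolding span_pair[symmetric] by (rule is_ideal_span)

lemma span_Diff_eq:
  assumes "finite S" "j \<in> ideal_span (S - {j})"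
  shows "ideal_span (S - {j}) = ideal_span S"
proof
  show "ideal_span (S - {j}) \<subseteq> ideal_span S" using assms(1) by (intro span_mono) auto
  have "S \<subseteq> ideal_span (S - {j})" using assms span_superset[of "S - {j}"] by auto
  then show "ideal_span S \<subseteq> ideal_span (S - {j})" by (rule span_least[OF is_ideal_span])
qed

lemma is_ideal_Union_chain:
  assumes "C \<noteq> {}" "\<And>I. I \<in> C \<Longrightarrow> is_ideal I" "\<And>X Y. X \<in> C \<Longrightarrow> Y \<in> C \<Longrightarrow> X \<subseteq> Y \<or> Y \<subseteq> X"
  shows "is_ideal (\<Union>C)"
  unfolding is_ideal_def
proof (intro conjI ballI allI)
  show "0 \<in> \<Union>C" using assms(1,2) ideal_0 by blast
next
  fix x y assume "x \<in> \<Union>C" "y \<in> \<Union>C"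
  then obtain X Y where "X \<in> C" "Y \<in> C" "x \<in> X" "y \<in> Y" by blast
  moreover have "is_ideal X" "is_ideal Y" using \<open>X \<in> C\<close> \<open>Y \<in> C\<close> assms(2) by auto
  ultimately show "x + y \<in> \<Union>C" using assms(3)[of X Y] ideal_add by blast
next
  fix a x assume "x \<in> \<Union>C"
  then show "a * x \<in> \<Union>C" using assms(2) ideal_mult by blast
qed

lemma ex_maximal_ideal_superset:
  assumes "is_ideal J" "1 \<notin> J"
  shows "\<exists>M. maximal_ideal M \<and> J \<subseteq> M"
proof -
  let ?A = "{I. is_ideal I \<and> J \<subseteq> I \<and> 1 \<notin> I}"
  have "\<exists>M\<in>?A. \<forall>X\<in>?A. M \<subseteq> X \<longrightarrow> X = M"
  proof (rule subset_Zorn_nonempty)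
    show "?A \<noteq> {}" using assms by blast
    fix C assume "C \<noteq> {}" "subset.chain ?A C"
    then have "C \<subseteq> ?A" "\<And>X Y. X \<in> C \<Longrightarrow> Y \<in> C \<Longrightarrow> X \<subseteq> Y \<or> Y \<subseteq> X"
      unfolding subset_chain_def by auto
    with \<open>C \<noteq> {}\<close> show "\<Union>C \<in> ?A"
      using is_ideal_Union_chain[of C] by auto
  qed
  then obtain M where M: "M \<in> ?A" and max: "\<forall>X\<in>?A. M \<subseteq> X \<longrightarrow> X = M" by blast
  have "maximal_ideal M" unfolding maximal_ideal_def
  proof (intro conjI allI impI)
    show "is_ideal M" "M \<noteq> UNIV" using M by auto
    fix K assume K: "is_ideal K \<and> M \<subseteq> K"
    show "K = M \<or> K = UNIV"
    proof (cases "1 \<in> K")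
      case True then show ?thesis using K ideal_eq_UNIV by blast
    next
      case False then show ?thesis using K M max by blast
    qed
  qed
  then show ?thesis using M by blast
qed

lemma local_ring_nonunit_add:
  fixes x y :: "'a::comm_ring_1"
  assumes "local_ring TYPE('a)" "\<not> x dvd 1" "\<not> y dvd 1"
  shows "\<not> (x + y) dvd 1"
proof
  assume "(x + y) dvd 1"
  obtain M where M: "maximal_ideal M" "{z. x dvd z} \<subseteq> M"
    using ex_maximal_ideal_superset[OF is_ideal_principal, of x] assms(2) by auto
  obtain M' where M': "maximal_ideal M'" "{z. y dvd z} \<subseteq> M'"
    using ex_maximal_ideal_superset[OF is_ideal_principal, of y] assms(3) by auto
  have "M' = M" using assms(1) M M' unfolding local_ring_def by blast
  have ideal: "is_ideal M" and proper: "M \<noteq> UNIV" using M(1) unfolding maximal_ideal_def by auto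
  have "x \<in> M" "y \<in> M" using M(2) M'(2) \<open>M' = M\<close> by auto
  then have "x + y \<in> M" using ideal_add[OF ideal] by blast
  then have "1 \<in> M" using \<open>(x + y) dvd 1\<close> ideal_mult[OF ideal] by (metis dvdE mult.commute)
  then show False using ideal_eq_UNIV[OF ideal] proper by blast
qed

lemma local_ring_one_plus_nonunit:
  fixes p :: "'a::comm_ring_1"
  assumes "local_ring TYPE('a)" "\<not> p dvd 1"
  shows "(1 + p) dvd 1"
  using local_ring_nonunit_add[OF assms(1), of "1 + p" "- p"] assms(2) by auto

section \<open>Quasi-projectivity from preserved relations\<close>

definition relations_preserved :: "'a::comm_ring_1 set \<Rightarrow> 'a set \<Rightarrow> bool" where
  "relations_preserved S I \<longleftrightarrow> (\<forall>c t. (\<forall>s\<in>S. t s \<in> I) \<longrightarrow>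
     (\<Sum>s\<in>S. c s * s) = 0 \<longrightarrow> (\<Sum>s\<in>S. c s * t s) = 0)"

lemma relations_preservedD:
  "relations_preserved S I \<Longrightarrow> \<forall>s\<in>S. t s \<in> I \<Longrightarrow> (\<Sum>s\<in>S. c s * s) = 0 \<Longrightarrow>
    (\<Sum>s\<in>S. c s * t s) = 0"
  unfolding relations_preserved_def by blast

lemma linear_map_mult: "linear_map V M h \<Longrightarrow> v \<in> V \<Longrightarrow> h (x * v) = x * h v"
  unfolding linear_map_def by (metis add_0 mult_zero_left)

lemma linear_map_mod_sum:
  assumes g: "linear_map_mod V M X g" and "is_ideal V" "is_ideal X" "finite F" "F \<subseteq> V"
  shows "g (\<Sum>s\<in>F. c s * s) - (\<Sum>s\<in>F. c s * g s) \<in> X"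
  using assms(4,5)
proof (induction F rule: finite_induct)
  case empty
  have "g (0 * 0 + 0 * 0) - (0 * g 0 + 0 * g 0) \<in> X"
    using g ideal_0[OF \<open>is_ideal V\<close>] unfolding linear_map_mod_def by blast
  then show ?case by simp
next
  case (insert x F)
  let ?U = "\<Sum>s\<in>F. c s * s"
  have "?U \<in> V" using insert.prems \<open>is_ideal V\<close> by (auto intro!: ideal_sum ideal_mult)
  then have "g (c x * x + 1 * ?U) - (c x * g x + 1 * g ?U) \<in> X"
    using g insert.prems unfolding linear_map_mod_def by blast
  from ideal_add[OF \<open>is_ideal X\<close> this insert.IH] insert.prems
  show ?case using insert.hyps by (simp add: algebra_simps)
qed

lemma relations_preserved_sum_eq:
  assumes rel: "relations_preserved S I" and t: "\<forall>s\<in>S. t s \<in> I"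
    and eq: "(\<Sum>s\<in>S. c s * s) = (\<Sum>s\<in>S. d s * s)"
  shows "(\<Sum>s\<in>S. c s * t s) = (\<Sum>s\<in>S. d s * t s)"
proof -
  have diff: "(\<Sum>s\<in>S. (c s - d s) * f s) = (\<Sum>s\<in>S. c s * f s) - (\<Sum>s\<in>S. d s * f s)"
    for f :: "'a \<Rightarrow> 'a"
    by (simp add: left_diff_distrib sum_subtractf)
  have "(\<Sum>s\<in>S. (c s - d s) * s) = 0" using diff[of "\<lambda>s. s"] eq by simp
  then have "(\<Sum>s\<in>S. (c s - d s) * t s) = 0" by (rule relations_preservedD[OF rel t])
  then show ?thesis using diff[of t] by simp
qed

lemma relations_preserved_extension:
  assumes rel: "relations_preserved S I" and t: "\<forall>s\<in>S. t s \<in> I" and "is_ideal I"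
  shows "\<exists>h. linear_map (ideal_span S) I h \<and> (\<forall>c. h (\<Sum>s\<in>S. c s * s) = (\<Sum>s\<in>S. c s * t s))"
proof -
  define h where "h v = (\<Sum>s\<in>S. (SOME c. v = (\<Sum>s\<in>S. c s * s)) s * t s)" for v
  have h: "h (\<Sum>s\<in>S. c s * s) = (\<Sum>s\<in>S. c s * t s)" for c
  proof -
    let ?c = "SOME c'. (\<Sum>s\<in>S. c s * s) = (\<Sum>s\<in>S. c' s * s)"
    have "(\<Sum>s\<in>S. c s * s) = (\<Sum>s\<in>S. ?c s * s)" by (rule someI[where x = c]) (rule refl)
    then show ?thesis unfolding h_def by (rule relations_preserved_sum_eq[OF rel t, symmetric])
  qed
  have "linear_map (ideal_span S) I h" unfolding linear_map_def
  proof (intro conjI ballI allI)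
    fix v assume "v \<in> ideal_span S"
    then obtain c where "v = (\<Sum>s\<in>S. c s * s)" unfolding ideal_span_def by blast
    then have "h v = (\<Sum>s\<in>S. c s * t s)" using h by simp
    then show "h v \<in> I" using t \<open>is_ideal I\<close> by (simp add: ideal_sum ideal_mult)
  next
    fix a b v w assume "v \<in> ideal_span S" "w \<in> ideal_span S"
    then obtain c d where v: "v = (\<Sum>s\<in>S. c s * s)" and w: "w = (\<Sum>s\<in>S. d s * s)"
      unfolding ideal_span_def by blast
    have "a * v + b * w = (\<Sum>s\<in>S. (a * c s + b * d s) * s)"
      unfolding v w by (simp add: sum.distrib sum_distrib_left algebra_simps)
    moreover have "(\<Sum>s\<in>S. (a * c s + b * d s) * t s) = a * h v + b * h w"
      unfolding v w h by (simp add: sum.distrib sum_distrib_left algebra_simps)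
    ultimately show "h (a * v + b * w) = a * h v + b * h w" using h by simp
  qed
  then show ?thesis using h by blast
qed

lemma quasi_projective_if_relations_preserved:
  assumes "finite S" "relations_preserved S (ideal_span S)"
  shows "quasi_projective (ideal_span S)"
  unfolding quasi_projective_def rel_projective_def
proof (intro allI impI)
  let ?I = "ideal_span S"
  fix X g assume "submodule X ?I \<and> linear_map_mod ?I ?I X g"
  then have X: "is_ideal X" and g: "linear_map_mod ?I ?I X g" unfolding submodule_def by auto
  have "\<forall>s\<in>S. g s \<in> ?I" using g span_superset[OF assms(1)] unfolding linear_map_mod_def by blast
  then obtain h where h: "linear_map ?I ?I h" "\<And>c. h (\<Sum>s\<in>S. c s * s) = (\<Sum>s\<in>S. c s * g s)"
    using relations_preserved_extension[OF assms(2)] is_ideal_span by blast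
  have "h v - g v \<in> X" if "v \<in> ?I" for v
  proof -
    obtain c where v: "v = (\<Sum>s\<in>S. c s * s)" using \<open>v \<in> ?I\<close> unfolding ideal_span_def by blast
    have "g v - h v \<in> X"
      using linear_map_mod_sum[OF g is_ideal_span X assms(1) span_superset[OF assms(1)]] v h(2)
      by simp
    then show ?thesis using ideal_neg[OF X] by fastforce
  qed
  then show "\<exists>h. linear_map ?I ?I h \<and> (\<forall>v\<in>?I. h v - g v \<in> X)" using h(1) by blast
qed

definition minimal_generating_set :: "'a::comm_ring_1 set \<Rightarrow> 'a set \<Rightarrow> bool" where
  "minimal_generating_set S I \<longleftrightarrow> finite S \<and> I = ideal_span S \<and>
     (\<forall>S'. finite S' \<and> I = ideal_span S' \<longrightarrow> card S \<le> card S')"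

lemma fqp_ring_if_minimal_generators_preserve_relations:
  assumes "\<And>(I::'a::comm_ring_1 set) S. minimal_generating_set S I \<Longrightarrow> relations_preserved S I"
  shows "fqp_ring TYPE('a)"
  unfolding fqp_ring_def
proof (intro allI impI)
  fix I :: "'a set" assume "is_ideal I \<and> fg_ideal I"
  then obtain S0 where "finite S0 \<and> I = ideal_span S0" unfolding fg_ideal_iff_span by blast
  then obtain S where "finite S \<and> I = ideal_span S"
    "\<And>S'. finite S' \<and> I = ideal_span S' \<Longrightarrow> card S \<le> card S'"
    using ex_has_least_nat[of "\<lambda>S. finite S \<and> I = ideal_span S" S0 card] by blast
  then have "minimal_generating_set S I" unfolding minimal_generating_set_def by blast
  then show "quasi_projective I"
    using assms quasi_projective_if_relations_preserved unfolding minimal_generating_set_def by blast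
qed

lemma minimal_generating_set_not_in_span_Diff:
  assumes "minimal_generating_set S I" "j \<in> S"
  shows "j \<notin> ideal_span (S - {j})"
proof
  assume "j \<in> ideal_span (S - {j})"
  moreover have "finite S" "I = ideal_span S" using assms(1) unfolding minimal_generating_set_def by auto
  ultimately have "card S \<le> card (S - {j})"
    using assms(1) span_Diff_eq unfolding minimal_generating_set_def by (metis finite_Diff)
  moreover have "card (S - {j}) < card S" using \<open>finite S\<close> assms(2) by (rule card_Diff1_less)
  ultimately show False by simp
qed

lemma minimal_generating_set_dvd_imp_eq:
  assumes "minimal_generating_set S I" "a \<in> S" "b \<in> S" "a dvd b"
  shows "a = b"
proof (rule ccontr)
  assume "a \<noteq> b"
  have "finite S" using assms(1) unfolding minimal_generating_set_def by blast
  then have "a \<in> ideal_span (S - {b})" using span_superset[of "S - {b}"] assms(2) \<open>a \<noteq> b\<close> by blast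
  then have "b \<in> ideal_span (S - {b})"
    using assms(4) ideal_mult[OF is_ideal_span] by (metis dvdE mult.commute)
  then show False using minimal_generating_set_not_in_span_Diff[OF assms(1,3)] by blast
qed

lemma relations_preserved_subsingleton:
  assumes "S \<subseteq> {a}"
  shows "relations_preserved S (ideal_span S)"
proof (cases "S = {}")
  case True then show ?thesis unfolding relations_preserved_def by simp
next
  case False
  then have S: "S = {a}" using assms by blast
  show ?thesis unfolding relations_preserved_def S
  proof (intro allI impI)
    fix c t assume "\<forall>s\<in>{a}. t s \<in> ideal_span {a}" and "(\<Sum>s\<in>{a}. c s * s) = 0"
    then obtain k where "t a = a * k" and "c a * a = 0" by (auto simp: span_singleton elim: dvdE)
    then show "(\<Sum>s\<in>{a}. c s * t s) = 0" by (simp add: mult.assoc [symmetric])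
  qed
qed

definition dvd_comparable :: "'a::comm_ring_1 \<Rightarrow> 'a \<Rightarrow> bool" where
  "dvd_comparable a b \<longleftrightarrow> a dvd b \<or> b dvd a"

lemma dvd_comparable_sym: "dvd_comparable a b \<longleftrightarrow> dvd_comparable b a"
  unfolding dvd_comparable_def by blast

lemma chain_ring_iff_dvd_comparable:
  "chain_ring TYPE('a::comm_ring_1) \<longleftrightarrow> (\<forall>a b::'a. dvd_comparable a b)"
proof
  assume "chain_ring TYPE('a)"
  show "\<forall>a b::'a. dvd_comparable a b"
  proof (intro allI)
    fix a b :: 'a
    have "{y. a dvd y} \<subseteq> {y. b dvd y} \<or> {y. b dvd y} \<subseteq> {y. a dvd y}"
      using \<open>chain_ring TYPE('a)\<close> is_ideal_principal unfolding chain_ring_def by blast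
    then show "dvd_comparable a b" unfolding dvd_comparable_def using dvd_refl by blast
  qed
next
  assume cmp: "\<forall>a b::'a. dvd_comparable a b"
  show "chain_ring TYPE('a)" unfolding chain_ring_def
  proof (intro allI impI)
    fix I J :: "'a set" assume "is_ideal I \<and> is_ideal J"
    then have ideals: "is_ideal I" "is_ideal J" by auto
    show "I \<subseteq> J \<or> J \<subseteq> I"
    proof (rule ccontr)
      assume "\<not> (I \<subseteq> J \<or> J \<subseteq> I)"
      then obtain a b where "a \<in> I" "a \<notin> J" "b \<in> J" "b \<notin> I" by blast
      moreover have "a dvd b \<or> b dvd a" using cmp unfolding dvd_comparable_def by blast
      ultimately show False using ideals ideal_mult by (metis dvdE mult.commute)
    qed
  qed
qed

lemma relations_preserved_chain_ring:
  assumes "chain_ring TYPE('a::comm_ring_1)" "minimal_generating_set S (I::'a set)"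
  shows "relations_preserved S I"
proof (cases "S = {}")
  case True
  then show ?thesis using assms(2) relations_preserved_subsingleton
    unfolding minimal_generating_set_def by blast
next
  case False
  then obtain a where "a \<in> S" by blast
  then have "S \<subseteq> {a}"
    using assms minimal_generating_set_dvd_imp_eq
    unfolding chain_ring_iff_dvd_comparable dvd_comparable_def by blast
  then show ?thesis using assms(2) relations_preserved_subsingleton
    unfolding minimal_generating_set_def by blast
qed

section \<open>Square-zero ideals with a valuation domain as quotient\<close>

lemma quotient_valuation_domainD:
  assumes "quotient_valuation_domain N"
  shows "is_ideal N" "1 \<notin> N" "x * y \<in> N \<Longrightarrow> x \<in> N \<or> y \<in> N"
    "(\<exists>c. y - c * x \<in> N) \<or> (\<exists>c. x - c * y \<in> N)"
  using assms unfolding quotient_valuation_domain_def by blast+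

lemma quotient_valuation_domain_ex_min_value:
  fixes N :: "'a::comm_ring_1 set"
  assumes V: "quotient_valuation_domain N" and "finite S" "S \<noteq> {}"
  shows "\<exists>j\<in>S. \<forall>s\<in>S. \<exists>d. c s - d * c j \<in> N"
  using assms(2,3)
proof (induction S rule: finite_ne_induct)
  case (singleton x)
  have "c x - 1 * c x \<in> N" using ideal_0[OF quotient_valuation_domainD(1)[OF V]] by simp
  then show ?case by blast
next
  case (insert x F)
  note N = quotient_valuation_domainD(1)[OF V]
  obtain j where j: "j \<in> F" "\<forall>s\<in>F. \<exists>d. c s - d * c j \<in> N" using insert.IH by blast
  consider e where "c x - e * c j \<in> N" | e where "c j - e * c x \<in> N"
    using quotient_valuation_domainD(4)[OF V, of "c j" "c x"] by blast
  then show ?case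
  proof cases
    case 1 then show ?thesis using j by blast
  next
    case (2 e)
    have "\<exists>d. c s - d * c x \<in> N" if s: "s \<in> F" for s
    proof -
      obtain d where "c s - d * c j \<in> N" using j s by blast
      from ideal_add[OF N this ideal_mult[OF N 2]]
      have "(c s - d * c j) + d * (c j - e * c x) \<in> N" .
      moreover have "(c s - d * c j) + d * (c j - e * c x) = c s - (d * e) * c x"
        by (simp add: algebra_simps)
      ultimately have "c s - (d * e) * c x \<in> N" by simp
      then show ?thesis by blast
    qed
    moreover have "c x - 1 * c x \<in> N" using ideal_0[OF N] by simp
    ultimately show ?thesis by blast
  qed
qed

lemma quotient_valuation_domain_dvd_comparable:
  fixes N :: "'a::comm_ring_1 set"
  assumes V: "quotient_valuation_domain N" and P: "\<forall>x\<in>N. \<forall>y\<in>N. x * y = 0"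
    and D: "divisible_over_quotient N" and a: "a \<notin> N"
  shows "dvd_comparable a s"
proof (cases "s \<in> N")
  case True
  then obtain y where "s = a * y" using D a unfolding divisible_over_quotient_def by blast
  then show ?thesis unfolding dvd_comparable_def by simp
next
  case False
  consider e where "s - e * a \<in> N" | e where "a - e * s \<in> N"
    using quotient_valuation_domainD(4)[OF V, of a s] by blast
  then show ?thesis
  proof cases
    case (1 e)
    then obtain y where "s - e * a = a * y" using D a unfolding divisible_over_quotient_def by blast
    then have "s = a * (e + y)" by (simp add: algebra_simps)
    then show ?thesis unfolding dvd_comparable_def by simp
  next
    case (2 e)
    then obtain y where y: "y \<in> N" "a - e * s = a * y"
      using D a unfolding divisible_over_quotient_def by blast
    have "y * y = 0" using P y(1) by blast
    have "a * (1 - y) = e * s" using y(2) by (simp add: algebra_simps)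
    \<comment> \<open>\<open>1 - y\<close> is a unit with inverse \<open>1 + y\<close>\<close>
    have "a = a * (1 - y) * (1 + y) + a * (y * y)" by (simp add: algebra_simps)
    also have "\<dots> = e * s * (1 + y)" using \<open>a * (1 - y) = e * s\<close> \<open>y * y = 0\<close> by simp
    also have "\<dots> = s * (e * (1 + y))" by (simp add: algebra_simps)
    finally show ?thesis unfolding dvd_comparable_def by simp
  qed
qed

lemma minimal_generating_set_relation_coeffs_in:
  fixes N S I :: "'a::comm_ring_1 set"
  assumes V: "quotient_valuation_domain N" and P: "\<forall>x\<in>N. \<forall>y\<in>N. x * y = 0"
    and T: "torsionfree_over_quotient N"
    and S: "minimal_generating_set S I" "S \<subseteq> N" and rel: "(\<Sum>s\<in>S. c s * s) = 0"
  shows "\<forall>s\<in>S. c s \<in> N"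
proof (rule ccontr)
  assume "\<not> (\<forall>s\<in>S. c s \<in> N)"
  then obtain a where a: "a \<in> S" "c a \<notin> N" by blast
  note N = quotient_valuation_domainD(1)[OF V]
  have fin: "finite S" using S(1) unfolding minimal_generating_set_def by blast
  obtain j where j: "j \<in> S" "\<forall>s\<in>S. \<exists>d. c s - d * c j \<in> N"
    using quotient_valuation_domain_ex_min_value[OF V fin] a(1) by blast
  then obtain d where d: "\<And>s. s \<in> S \<Longrightarrow> c s - d s * c j \<in> N" by metis
  have cj: "c j \<notin> N"
  proof
    assume "c j \<in> N"
    from ideal_add[OF N d[OF a(1)] ideal_mult[OF N this, of "d a"]] a(2) show False by simp
  qed
  have "c s * s = c j * (d s * s)" if s: "s \<in> S" for s
  proof -
    have "(c s - d s * c j) * s = 0" using P d[OF s] S(2) s by blast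
    then show ?thesis by (simp add: algebra_simps)
  qed
  then have "c j * (\<Sum>s\<in>S. d s * s) = 0" using rel by (simp add: sum_distrib_left)
  moreover have "(\<Sum>s\<in>S. d s * s) \<in> N" using S(2) N by (auto intro!: ideal_sum ideal_mult)
  ultimately have sum_d: "(\<Sum>s\<in>S. d s * s) = 0"
    using T cj unfolding torsionfree_over_quotient_def by blast
  \<comment> \<open>\<open>d j \<equiv> 1\<close> modulo \<open>N\<close>, so the relation \<open>\<Sum>s\<in>S. d s * s = 0\<close> expresses \<open>j\<close> by the
    other generators\<close>
  have "(1 - d j) * c j \<in> N" using d[OF j(1)] by (simp add: algebra_simps)
  then have "1 - d j \<in> N" using quotient_valuation_domainD(3)[OF V] cj by blast
  then have "(1 - d j) * j = 0" using P S(2) j(1) by blast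
  then have "j + (\<Sum>s\<in>S - {j}. d s * s) = 0"
    using sum_d sum.remove[OF fin j(1), of "\<lambda>s. d s * s"] by (simp add: algebra_simps)
  then have "j = (\<Sum>s\<in>S - {j}. (- d s) * s)"
    by (simp add: sum_negf eq_neg_iff_add_eq_0)
  then have "j \<in> ideal_span (S - {j})" by (rule span_memI)
  then show False using minimal_generating_set_not_in_span_Diff[OF S(1) j(1)] by blast
qed

lemma relations_preserved_square_zero:
  fixes N S I :: "'a::comm_ring_1 set"
  assumes V: "quotient_valuation_domain N" and P: "\<forall>x\<in>N. \<forall>y\<in>N. x * y = 0"
    and D: "divisible_over_quotient N" and T: "torsionfree_over_quotient N"
    and S: "minimal_generating_set S I"
  shows "relations_preserved S I"
proof (cases "S \<subseteq> N")
  case True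
  have I: "I = ideal_span S" using S unfolding minimal_generating_set_def by blast
  have "I \<subseteq> N" unfolding I using span_least[OF quotient_valuation_domainD(1)[OF V] True] .
  show ?thesis unfolding relations_preserved_def
  proof (intro allI impI)
    fix c t assume t: "\<forall>s\<in>S. t s \<in> I" and "(\<Sum>s\<in>S. c s * s) = 0"
    then have "\<forall>s\<in>S. c s \<in> N" using minimal_generating_set_relation_coeffs_in[OF V P T S True] by blast
    then have "\<forall>s\<in>S. c s * t s = 0" using t \<open>I \<subseteq> N\<close> P by blast
    then show "(\<Sum>s\<in>S. c s * t s) = 0" by simp
  qed
next
  case False
  then obtain a where a: "a \<in> S" "a \<notin> N" by blast
  have "b = a" if "b \<in> S" for b
    using quotient_valuation_domain_dvd_comparable[OF V P D a(2), of b]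
      minimal_generating_set_dvd_imp_eq[OF S] a(1) that
    unfolding dvd_comparable_def by metis
  then have "S \<subseteq> {a}" by blast
  then show ?thesis using S relations_preserved_subsingleton
    unfolding minimal_generating_set_def by blast
qed

section \<open>Incomparable elements in local fqp-rings\<close>

lemma unit_mult_eq_0D:
  fixes u :: "'a::comm_ring_1"
  assumes "u dvd 1" "u * d = 0"
  shows "d = 0"
proof -
  obtain k where "1 = u * k" using assms(1) by (rule dvdE)
  then have "d = k * (u * d)" by (simp add: algebra_simps)
  then show ?thesis using assms(2) by simp
qed

lemma dvd_mult_imp_not_unit:
  fixes u :: "'a::comm_monoid_mult"
  assumes "a dvd b * u" "\<not> a dvd b"
  shows "\<not> u dvd 1"
proof
  assume "u dvd 1"
  then obtain m where "1 = u * m" by (rule dvdE)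
  then have "b = b * u * m" by (simp add: mult.assoc)
  then show False using dvd_mult2[OF assms(1), of m] assms(2) by simp
qed

lemma pair_rep_diff:
  fixes a b :: "'a::comm_ring_1"
  shows "p1 * a + q1 * b = p2 * a + q2 * b \<Longrightarrow> (p1 - p2) * a = (q2 - q1) * b"
  by (simp add: algebra_simps)

lemma linear_map_mod_pair_coefficient:
  fixes a b e :: "'a::comm_ring_1"
  assumes e: "e \<in> pair_ideal a b" and defect: "\<And>\<delta> \<delta>'. \<delta> * a = \<delta>' * b \<Longrightarrow> \<delta> * e \<in> X"
    and pq: "\<And>v. v \<in> pair_ideal a b \<Longrightarrow> v = p v * a + q v * b"
  shows "linear_map_mod (pair_ideal a b) (pair_ideal a b) X (\<lambda>v. p v * e)"
  unfolding linear_map_mod_def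
proof (intro conjI ballI allI)
  let ?I = "pair_ideal a b"
  note I = is_ideal_pair_ideal[of a b]
  fix x y v w assume "v \<in> ?I" "w \<in> ?I"
  show "p v * e \<in> ?I" using ideal_mult[OF I e] .
  let ?u = "x * v + y * w"
  have "?u \<in> ?I" using I ideal_add ideal_mult \<open>v \<in> ?I\<close> \<open>w \<in> ?I\<close> by blast
  have "p ?u * a + q ?u * b = x * (p v * a + q v * b) + y * (p w * a + q w * b)"
    using pq[OF \<open>?u \<in> ?I\<close>, symmetric] pq[OF \<open>v \<in> ?I\<close>, symmetric] pq[OF \<open>w \<in> ?I\<close>, symmetric]
    by simp
  also have "\<dots> = (x * p v + y * p w) * a + (x * q v + y * q w) * b" by (simp add: algebra_simps)
  finally have "(p ?u - (x * p v + y * p w)) * e \<in> X" by (rule defect[OF pair_rep_diff])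
  then show "p ?u * e - (x * (p v * e) + y * (p w * e)) \<in> X" by (simp add: algebra_simps)
qed

lemma fqp_ring_pair_lift:
  fixes a b e :: "'a::comm_ring_1"
  assumes fqp: "fqp_ring TYPE('a)" and X: "submodule X (pair_ideal a b)" and e: "e \<in> pair_ideal a b"
    and defect: "\<And>\<delta> \<delta>'. \<delta> * a = \<delta>' * b \<Longrightarrow> \<delta> * e \<in> X"
  shows "\<exists>h. linear_map (pair_ideal a b) (pair_ideal a b) h \<and>
    (\<forall>p q. h (p * a + q * b) - p * e \<in> X)"
proof -
  let ?I = "pair_ideal a b"
  have "fg_ideal ?I" unfolding span_pair[symmetric] fg_ideal_iff_span
    by (intro exI[of _ "{a, b}"]) simp
  then have "quasi_projective ?I" using fqp is_ideal_pair_ideal unfolding fqp_ring_def by blast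
  have "\<forall>v\<in>?I. \<exists>pq. v = fst pq * a + snd pq * b" unfolding pair_ideal_def by force
  then obtain p q where "\<forall>v\<in>?I. v = p v * a + q v * b" by (auto dest!: bchoice)
  then have pq: "v = p v * a + q v * b" if "v \<in> ?I" for v using that by blast
  have "linear_map_mod ?I ?I X (\<lambda>v. p v * e)"
    by (rule linear_map_mod_pair_coefficient[OF e]) (use defect pq in auto)
  then obtain h where h: "linear_map ?I ?I h" "\<forall>v\<in>?I. h v - p v * e \<in> X"
    using \<open>quasi_projective ?I\<close> X unfolding quasi_projective_def rel_projective_def by blast
  have "h (p' * a + q' * b) - p' * e \<in> X" for p' q'
  proof -
    let ?v = "p' * a + q' * b"
    have "?v \<in> ?I" by (rule pair_idealI)
    have "(p ?v - p') * e \<in> X" by (rule defect[OF pair_rep_diff[OF pq[OF \<open>?v \<in> ?I\<close>, symmetric]]])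
    then have "(h ?v - p ?v * e) + (p ?v - p') * e \<in> X"
      using h(2) \<open>?v \<in> ?I\<close> ideal_add[of X] X unfolding submodule_def by blast
    then show ?thesis by (simp add: algebra_simps)
  qed
  then show ?thesis using h(1) by blast
qed

lemma submodule_common_multiples: "submodule {d. a dvd d \<and> b dvd d} (pair_ideal a b)"
  unfolding submodule_def
proof
  show "{d. a dvd d \<and> b dvd d} \<subseteq> pair_ideal a b"
  proof
    fix d assume "d \<in> {d. a dvd d \<and> b dvd d}"
    then obtain k where "d = a * k" by blast
    then have "d = k * a + 0 * b" by (simp add: mult.commute)
    then show "d \<in> pair_ideal a b" using pair_idealI by metis
  qed
  show "is_ideal {d. a dvd d \<and> b dvd d}" unfolding is_ideal_def by (simp add: dvd_add dvd_mult)
qed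

lemma submodule_nonunit_multiples:
  fixes a b :: "'a::comm_ring_1"
  assumes loc: "local_ring TYPE('a)"
  shows "submodule {p * b | p. \<not> p dvd 1} (pair_ideal a b)"
  unfolding submodule_def
proof
  let ?X = "{p * b | p. \<not> p dvd 1}"
  show "?X \<subseteq> pair_ideal a b" using pair_idealI[of 0 a _ b] by auto
  show "is_ideal ?X" unfolding is_ideal_def
  proof (intro conjI ballI allI)
    have "(0::'a) = 0 * b \<and> \<not> (0::'a) dvd 1" by simp
    then show "0 \<in> ?X" by blast
  next
    fix x y assume "x \<in> ?X" "y \<in> ?X"
    then obtain p q where "x = p * b" "\<not> p dvd 1" "y = q * b" "\<not> q dvd 1" by blast
    moreover have "\<not> (p + q) dvd 1" using local_ring_nonunit_add[OF loc] calculation(2,4) .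
    moreover have "x + y = (p + q) * b" using calculation(1,3) by (simp add: distrib_right)
    ultimately show "x + y \<in> ?X" by blast
  next
    fix c x assume "x \<in> ?X"
    then obtain p where "x = p * b" "\<not> p dvd 1" by blast
    moreover have "\<not> (c * p) dvd 1" using calculation(2) dvd_mult_right by blast
    moreover have "c * x = (c * p) * b" using calculation(1) by (simp add: mult.assoc)
    ultimately show "c * x \<in> ?X" by blast
  qed
qed

lemma incomparable_mult_eq_imp_zero:
  fixes a b r s :: "'a::comm_ring_1"
  assumes loc: "local_ring TYPE('a)" and fqp: "fqp_ring TYPE('a)"
    and inc: "\<not> dvd_comparable a b" and eq: "r * a = s * b"
  shows "r * a = 0"
proof -
  let ?X = "{d. a dvd d \<and> b dvd d}"
  have "\<delta> * a \<in> ?X" if "\<delta> * a = \<delta>' * b" for \<delta> \<delta>'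
    using that dvd_triv_right[of a \<delta>] dvd_triv_right[of b \<delta>'] by simp
  then obtain h where h: "linear_map (pair_ideal a b) (pair_ideal a b) h"
      "\<forall>p q. h (p * a + q * b) - p * a \<in> ?X"
    using fqp_ring_pair_lift[OF fqp submodule_common_multiples pair_ideal_left] by blast
  have "h a - a \<in> ?X" using h(2)[rule_format, of 1 0] by simp
  then have "a dvd h a - a" "b dvd h a - a" by auto
  from this(1) obtain \<mu> where \<mu>: "h a - a = a * \<mu>" by (rule dvdE)
  have "\<not> \<mu> dvd 1"
    using dvd_mult_imp_not_unit[of b a \<mu>] \<open>b dvd h a - a\<close> \<mu> inc unfolding dvd_comparable_def by simp
  have "h b \<in> ?X" using h(2)[rule_format, of 0 1] by simp
  then have "b dvd h b" "a dvd h b" by auto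
  from this(1) obtain \<nu> where \<nu>: "h b = b * \<nu>" by (rule dvdE)
  have "\<not> \<nu> dvd 1"
    using dvd_mult_imp_not_unit[of a b \<nu>] \<open>a dvd h b\<close> \<nu> inc unfolding dvd_comparable_def by simp
  then have "\<not> (\<mu> + - \<nu>) dvd 1"
    using local_ring_nonunit_add[OF loc \<open>\<not> \<mu> dvd 1\<close>, of "- \<nu>"] by simp
  then have unit: "(1 + (\<mu> - \<nu>)) dvd 1" using local_ring_one_plus_nonunit[OF loc] by simp
  have "r * h a = s * h b"
    using linear_map_mult[OF h(1)] pair_ideal_left pair_ideal_right eq by metis
  moreover have "h a = (1 + \<mu>) * a" using \<mu> by (simp add: algebra_simps)
  ultimately have "(1 + \<mu>) * (r * a) = \<nu> * (s * b)" unfolding \<nu> by (simp add: algebra_simps)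
  then have "(1 + (\<mu> - \<nu>)) * (r * a) = 0" unfolding eq by (simp add: algebra_simps)
  then show ?thesis using unit_mult_eq_0D[OF unit] by blast
qed

lemma incomparable_ann_subset:
  fixes a b r :: "'a::comm_ring_1"
  assumes loc: "local_ring TYPE('a)" and fqp: "fqp_ring TYPE('a)"
    and inc: "\<not> dvd_comparable a b" and ra: "r * a = 0"
  shows "r * b = 0"
proof -
  let ?X = "{p * b | p. \<not> p dvd 1}"
  have "a \<noteq> 0" using inc unfolding dvd_comparable_def by auto
  have "\<delta> * b \<in> ?X" if "\<delta> * a = \<delta>' * b" for \<delta> \<delta>'
  proof -
    have "\<delta> * a = 0" using incomparable_mult_eq_imp_zero[OF loc fqp inc that] .
    then have "\<not> \<delta> dvd 1" using unit_mult_eq_0D \<open>a \<noteq> 0\<close> by blast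
    then show ?thesis by blast
  qed
  then obtain h where h: "linear_map (pair_ideal a b) (pair_ideal a b) h"
      "\<forall>p q. h (p * a + q * b) - p * b \<in> ?X"
    using fqp_ring_pair_lift[OF fqp submodule_nonunit_multiples[OF loc] pair_ideal_right] by blast
  have "h a - b \<in> ?X" using h(2)[rule_format, of 1 0] by simp
  then obtain p where p: "h a - b = p * b" "\<not> p dvd 1" by blast
  have "r * h a = h (r * a)" using linear_map_mult[OF h(1) pair_ideal_left] by simp
  also have "\<dots> = h (0 * a)" using ra by simp
  also have "\<dots> = 0" using linear_map_mult[OF h(1) pair_ideal_left, of 0] by simp
  finally have "r * h a = 0" .
  moreover have "h a = (1 + p) * b" using p(1) by (simp add: algebra_simps)
  ultimately have "(1 + p) * (r * b) = 0" by (simp add: algebra_simps)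
  then show ?thesis using unit_mult_eq_0D[OF local_ring_one_plus_nonunit[OF loc p(2)]] by blast
qed

section \<open>Rings in which incomparable elements annihilate each other\<close>

lemma not_dvd_comparable_mult_cancel:
  "\<not> dvd_comparable (c * a) (c * b) \<Longrightarrow> \<not> dvd_comparable a b"
  unfolding dvd_comparable_def using mult_dvd_mono[OF dvd_refl[of c]] by blast

lemma mult_self_eq_0_imp_nilradical: "x * x = 0 \<Longrightarrow> x \<in> nilradical"
  unfolding nilradical_def by (auto simp: power2_eq_square intro!: exI[of _ 2])

locale incomparables_annihilate =
  fixes a0 b0 :: "'a::comm_ring_1"
  assumes mult_eq_imp_zero:
      "\<And>a b r s. \<not> dvd_comparable a b \<Longrightarrow> r * a = s * b \<Longrightarrow> r * a = (0::'a)"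
    and ann_subset: "\<And>a b r. \<not> dvd_comparable a b \<Longrightarrow> r * a = 0 \<Longrightarrow> r * b = (0::'a)"
    and incomparable: "\<not> dvd_comparable a0 b0"
begin

lemma incomparable_square_zero:
  fixes a b :: 'a
  assumes "\<not> dvd_comparable a b"
  shows "a * a = 0"
proof -
  have "b * a = 0" using mult_eq_imp_zero[OF assms, of b a] by (simp add: mult.commute)
  then have "a * b = 0" by (simp add: mult.commute)
  then show ?thesis using ann_subset[of b a a] assms dvd_comparable_sym by blast
qed

lemma incomparable_nilradical: "\<not> dvd_comparable a b \<Longrightarrow> (a::'a) \<in> nilradical"
  using incomparable_square_zero mult_self_eq_0_imp_nilradical by blast

lemma not_nilradical_dvd_comparable: "(c::'a) \<notin> nilradical \<Longrightarrow> dvd_comparable c y"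
  using incomparable_nilradical by blast

lemma dvd_comparable_nonzero_dvd:
  fixes a b x :: 'a
  assumes inc: "\<not> dvd_comparable a b" and "dvd_comparable x a" "dvd_comparable x b" "x \<noteq> 0"
  shows "x dvd a"
proof (rule ccontr)
  assume "\<not> x dvd a"
  then have "a dvd x" using assms(2) unfolding dvd_comparable_def by blast
  then have "\<not> x dvd b" using inc dvd_trans unfolding dvd_comparable_def by blast
  then have "b dvd x" using assms(3) unfolding dvd_comparable_def by blast
  obtain k where "x = a * k" using \<open>a dvd x\<close> by (rule dvdE)
  obtain l where "x = b * l" using \<open>b dvd x\<close> by (rule dvdE)
  have "k * a = l * b" using \<open>x = a * k\<close> \<open>x = b * l\<close> by (simp add: mult.commute)
  then have "k * a = 0" using mult_eq_imp_zero[OF inc] by blast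
  then show False using \<open>x = a * k\<close> \<open>x \<noteq> 0\<close> by (simp add: mult.commute)
qed

lemma not_nilradical_dvd_incomparable:
  fixes c y z :: 'a
  assumes "c \<notin> nilradical" "\<not> dvd_comparable y z"
  shows "c dvd y"
proof -
  have "c \<noteq> 0" using assms(1) mult_self_eq_0_imp_nilradical[of 0] by auto
  then show ?thesis
    using dvd_comparable_nonzero_dvd[OF assms(2)] not_nilradical_dvd_comparable[OF assms(1)] by blast
qed

lemma nilradical_nonzero_ex_incomparable:
  fixes x :: 'a
  assumes "x \<in> nilradical" "x \<noteq> 0"
  shows "\<exists>y. \<not> dvd_comparable x y"
proof (rule ccontr)
  assume "\<nexists>y. \<not> dvd_comparable x y"
  then have cmp: "dvd_comparable x y" for y by blast
  have "\<exists>m m'. a0 = x ^ j * m \<and> b0 = x ^ j * m'" for j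
  proof (induction j)
    case 0 show ?case by simp
  next
    case (Suc j)
    then obtain m m' where m: "a0 = x ^ j * m" "b0 = x ^ j * m'" by blast
    then have "\<not> dvd_comparable m m'"
      using incomparable not_dvd_comparable_mult_cancel[of "x ^ j" m m'] by simp
    then have "x dvd m" "x dvd m'"
      using dvd_comparable_nonzero_dvd cmp assms(2) dvd_comparable_sym by blast+
    then obtain k k' where "m = x * k" "m' = x * k'" by (auto elim!: dvdE)
    then have "a0 = x ^ Suc j * k" "b0 = x ^ Suc j * k'" using m by (simp_all add: mult.assoc)
    then show ?case by blast
  qed
  moreover obtain n where "x ^ n = 0" using assms(1) unfolding nilradical_def by blast
  ultimately have "a0 = 0" by (metis mult_zero_left)
  then show False using incomparable unfolding dvd_comparable_def by simp
qed

lemma nilradical_mult_eq_0: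
  fixes x y :: 'a
  assumes "x \<in> nilradical" "y \<in> nilradical"
  shows "x * y = 0"
proof -
  have square: "z * z = 0" if "z \<in> nilradical" for z :: 'a
    using nilradical_nonzero_ex_incomparable[OF that] incomparable_square_zero by (cases "z = 0") auto
  show ?thesis
  proof (cases "dvd_comparable x y")
    case True
    then obtain k where "y = x * k \<or> x = y * k" unfolding dvd_comparable_def by (auto elim!: dvdE)
    then show ?thesis using square[OF assms(1)] square[OF assms(2)] by (auto simp: algebra_simps)
  next
    case False
    then have "y * x = 0" using mult_eq_imp_zero[of x y y x] by (simp add: mult.commute)
    then show ?thesis by (simp add: mult.commute)
  qed
qed

lemma is_ideal_nilradical: "is_ideal (nilradical :: 'a set)"
  unfolding is_ideal_def
proof (intro conjI ballI allI)
  show "0 \<in> (nilradical :: 'a set)" using mult_self_eq_0_imp_nilradical[of 0] by simp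
next
  fix x y :: 'a assume "x \<in> nilradical" "y \<in> nilradical"
  then have "x * x = 0" "y * y = 0" "x * y = 0" using nilradical_mult_eq_0 by blast+
  then have "(x + y) * (x + y) = 0" by (simp add: algebra_simps)
  then show "x + y \<in> nilradical" by (rule mult_self_eq_0_imp_nilradical)
next
  fix a x :: 'a assume "x \<in> nilradical"
  then have "x * x = 0" using nilradical_mult_eq_0 by blast
  then have "(a * x) * (a * x) = 0" by (simp add: algebra_simps)
  then show "a * x \<in> nilradical" by (rule mult_self_eq_0_imp_nilradical)
qed

lemma nilradical_prime:
  fixes x y :: 'a
  assumes "x * y \<in> nilradical"
  shows "x \<in> nilradical \<or> y \<in> nilradical"
proof (rule ccontr)
  assume "\<not> (x \<in> nilradical \<or> y \<in> nilradical)"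
  then have x: "x \<notin> nilradical" and y: "y \<notin> nilradical" by auto
  obtain a1 b1 where "a0 = x * a1" "b0 = x * b1"
    using not_nilradical_dvd_incomparable[OF x] incomparable dvd_comparable_sym by (metis dvdE)
  then have inc1: "\<not> dvd_comparable a1 b1" using incomparable not_dvd_comparable_mult_cancel by blast
  obtain a2 b2 where "a1 = y * a2" "b1 = y * b2"
    using not_nilradical_dvd_incomparable[OF y] inc1 dvd_comparable_sym by (metis dvdE)
  then have "a2 \<in> nilradical"
    using inc1 not_dvd_comparable_mult_cancel incomparable_nilradical by blast
  then have "(x * y) * a2 = 0" using nilradical_mult_eq_0 assms by blast
  then have "a0 = 0" using \<open>a0 = x * a1\<close> \<open>a1 = y * a2\<close> by (simp add: mult.assoc)
  then show False using incomparable unfolding dvd_comparable_def by simp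
qed

lemma quotient_valuation_domain_nilradical: "quotient_valuation_domain (nilradical :: 'a set)"
  unfolding quotient_valuation_domain_def
proof (intro conjI allI impI)
  show "is_ideal (nilradical :: 'a set)" by (rule is_ideal_nilradical)
  show "(1::'a) \<notin> nilradical" unfolding nilradical_def by simp
  fix x y :: 'a
  show "x * y \<in> nilradical \<Longrightarrow> x \<in> nilradical \<or> y \<in> nilradical" by (rule nilradical_prime)
  show "(\<exists>c. y - c * x \<in> nilradical) \<or> (\<exists>c. x - c * y \<in> nilradical)"
  proof (cases "x \<in> nilradical")
    case True
    then have "x - 0 * y \<in> nilradical" by simp
    then show ?thesis by blast
  next
    case False
    then have "x dvd y \<or> y dvd x" using not_nilradical_dvd_comparable unfolding dvd_comparable_def by blast
    then show ?thesis
    proof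
      assume "x dvd y"
      then obtain k where "y = x * k" by (rule dvdE)
      then have "y - k * x = 0" by (simp add: mult.commute)
      then show ?thesis using ideal_0[OF is_ideal_nilradical] by metis
    next
      assume "y dvd x"
      then obtain k where "x = y * k" by (rule dvdE)
      then have "x - k * y = 0" by (simp add: mult.commute)
      then show ?thesis using ideal_0[OF is_ideal_nilradical] by metis
    qed
  qed
qed

lemma divisible_over_quotient_nilradical: "divisible_over_quotient (nilradical :: 'a set)"
  unfolding divisible_over_quotient_def
proof (intro allI impI ballI)
  fix r x :: 'a assume r: "r \<notin> nilradical" and x: "x \<in> nilradical"
  show "\<exists>y\<in>nilradical. x = r * y"
  proof (cases "x = 0")
    case True then show ?thesis using ideal_0[OF is_ideal_nilradical] by (intro bexI[of _ 0]) auto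
  next
    case False
    then obtain z where xz: "\<not> dvd_comparable x z" using nilradical_nonzero_ex_incomparable x by blast
    obtain w w' where "x = r * w" "z = r * w'"
      using not_nilradical_dvd_incomparable[OF r] xz dvd_comparable_sym by (metis dvdE)
    then have "w \<in> nilradical" using xz not_dvd_comparable_mult_cancel incomparable_nilradical by blast
    then show ?thesis using \<open>x = r * w\<close> by blast
  qed
qed

lemma torsionfree_over_quotient_nilradical: "torsionfree_over_quotient (nilradical :: 'a set)"
  unfolding torsionfree_over_quotient_def
proof (intro allI impI ballI)
  fix r x :: 'a assume x: "x \<in> nilradical" and "r \<notin> nilradical \<and> r * x = 0"
  then have r: "r \<notin> nilradical" and rx: "r * x = 0" by auto
  show "x = 0"
  proof (rule ccontr)
    assume "x \<noteq> 0"
    then obtain z where xz: "\<not> dvd_comparable x z" using nilradical_nonzero_ex_incomparable x by blast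
    have "z \<noteq> 0" using xz unfolding dvd_comparable_def by auto
    have rz: "r * z = 0" using ann_subset[OF xz rx] .
    obtain x1 z1 where x1: "x = r * x1" and z1: "z = r * z1"
      using not_nilradical_dvd_incomparable[OF r] xz dvd_comparable_sym by (metis dvdE)
    have inc1: "\<not> dvd_comparable x1 z1" using xz x1 z1 not_dvd_comparable_mult_cancel by blast
    \<comment> \<open>\<open>z\<close> and \<open>x1\<close> are comparable, since \<open>r\<close> kills \<open>z\<close> but not \<open>x1\<close>\<close>
    have "dvd_comparable z x1" using ann_subset[of z x1 r] rz x1 \<open>x \<noteq> 0\<close> by auto
    moreover have "\<not> z dvd x1"
    proof
      assume "z dvd x1"
      then have "r * z dvd r * x1" by (rule mult_dvd_mono[OF dvd_refl])
      then show False using rz x1 \<open>x \<noteq> 0\<close> by simp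
    qed
    ultimately obtain k where "z = x1 * k" unfolding dvd_comparable_def by (auto elim: dvdE)
    then have "k * x1 = r * z1" using z1 by (simp add: mult.commute)
    then have "k * x1 = 0" using mult_eq_imp_zero[OF inc1] by blast
    then show False using \<open>z = x1 * k\<close> \<open>z \<noteq> 0\<close> by (simp add: mult.commute)
  qed
qed

end

lemma fqp_local_ring_not_chain_ring:
  assumes loc: "local_ring TYPE('a::comm_ring_1)" and fqp: "fqp_ring TYPE('a)"
    and "\<not> chain_ring TYPE('a)"
  shows "quotient_valuation_domain (nilradical :: 'a set) \<and>
      (\<forall>x\<in>(nilradical :: 'a set). \<forall>y\<in>nilradical. x * y = 0) \<and>
      divisible_over_quotient (nilradical :: 'a set) \<and>
      torsionfree_over_quotient (nilradical :: 'a set)"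
proof -
  obtain a0 b0 :: 'a where "\<not> dvd_comparable a0 b0"
    using assms(3) unfolding chain_ring_iff_dvd_comparable by blast
  then interpret incomparables_annihilate a0 b0
    using incomparable_mult_eq_imp_zero[OF loc fqp] incomparable_ann_subset[OF loc fqp]
    by unfold_locales blast+
  show ?thesis
    using quotient_valuation_domain_nilradical nilradical_mult_eq_0
      divisible_over_quotient_nilradical torsionfree_over_quotient_nilradical by blast
qed

lemma fqp_ring_if_chain_ring: "chain_ring TYPE('a::comm_ring_1) \<Longrightarrow> fqp_ring TYPE('a)"
  by (intro fqp_ring_if_minimal_generators_preserve_relations relations_preserved_chain_ring)

lemma fqp_ring_if_square_zero_ideal:
  fixes N :: "'a::comm_ring_1 set"
  assumes "quotient_valuation_domain N" "\<forall>x\<in>N. \<forall>y\<in>N. x * y = 0"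
    and "divisible_over_quotient N" "torsionfree_over_quotient N"
  shows "fqp_ring TYPE('a)"
  by (intro fqp_ring_if_minimal_generators_preserve_relations relations_preserved_square_zero[OF assms])

theorem theorem4p1:
  assumes "local_ring TYPE('a::comm_ring_1)"
  shows "fqp_ring TYPE('a) \<longleftrightarrow>
    (chain_ring TYPE('a) \<or>
     (quotient_valuation_domain (nilradical :: 'a set) \<and>
      (\<forall>x\<in>(nilradical :: 'a set). \<forall>y\<in>nilradical. x * y = 0) \<and>
      divisible_over_quotient (nilradical :: 'a set) \<and>
      torsionfree_over_quotient (nilradical :: 'a set)))"
  using fqp_local_ring_not_chain_ring[OF assms] fqp_ring_if_chain_ring
    fqp_ring_if_square_zero_ideal[of "nilradical :: 'a set"]
  by blast

end
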